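(* The set $\mathscr U_k:=\{\underline A\in\mathcal C_k(d):\Theta_k(\underline A)>0\}$ is open and dense in $\mathcal C_k(d)$, where $\Theta_k(\underline A):=\min\{\|\wedge_k(A_aA_b)\|:1\le a,b\le m\}$ for $\underline A=(A_1,\dots,A_m)$.
   Context: Fix integers $m,d\ge1$ and $1\le k\le d$. $\mathcal C_k(d)$ is the set of tuples $\underline A=(A_1,\dots,A_m)\in{\rm Mat}(d,\mathbb R)^m$ with $\mathrm{rank}(A_j)=k$ for all $j$, with the subspace topology from ${\rm Mat}(d,\mathbb R)^m\cong\mathbb R^{md^2}$. $\wedge_kA$ is the $k$-th exterior power of a matrix $A$ (the matrix of its $k\times k$ minors). *)

theory Defs
  imports "HOL-Analysis.Analysis"
begin

text \<open>Square d x d real matrices are \<open>real^'n^'n\<close> with \<open>d = CARD('n)\<close>; the index type is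
  linearly ordered so that k x k minors have a well-defined sign.  An m-tuple of matrices
  is an element of \<open>(real^'n^'n)^'m\<close> with \<open>m = CARD('m)\<close>.\<close>

definition minor :: "nat \<Rightarrow> real^('n::{finite,linorder})^('n::{finite,linorder}) \<Rightarrow> ('n::{finite,linorder}) set \<Rightarrow> ('n::{finite,linorder}) set \<Rightarrow> real" where
  "minor k A I J =
     (let rs = sorted_list_of_set I; cs = sorted_list_of_set J in
      \<Sum>p\<in>{p. p permutes {0..<k}}. of_int (sign p) * (\<Prod>i<k. A $ (rs ! i) $ (cs ! p i)))"

text \<open>The k-th exterior power (compound matrix) of A, indexed by the k-subsets of the index set.\<close>
definition wedge :: "nat \<Rightarrow> real^('n::{finite,linorder})^('n::{finite,linorder}) \<Rightarrow> ('n::{finite,linorder}) set \<Rightarrow> ('n::{finite,linorder}) set \<Rightarrow> real" where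
  "wedge k A I J = (if card I = k \<and> card J = k then minor k A I J else 0)"

definition wedge_norm :: "nat \<Rightarrow> real^('n::{finite,linorder})^('n::{finite,linorder}) \<Rightarrow> real" where
  "wedge_norm k (A :: real^('n::{finite,linorder})^('n::{finite,linorder})) =
     sqrt (\<Sum>I\<in>{I::'n set. card I = k}. \<Sum>J\<in>{J::'n set. card J = k}. (wedge k A I J)\<^sup>2)"

definition Theta :: "nat \<Rightarrow> (real^('n::{finite,linorder})^('n::{finite,linorder}))^('m::finite) \<Rightarrow> real" where
  "Theta k A = Min {wedge_norm k (A $ a ** A $ b) | a b. True}"

definition Ck :: "nat \<Rightarrow> ((real^('n::{finite,linorder})^('n::{finite,linorder}))^('m::finite)) set" where
  "Ck k = {A. \<forall>j. rank (A $ j) = k}"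

definition Uk :: "nat \<Rightarrow> ((real^('n::{finite,linorder})^('n::{finite,linorder}))^('m::finite)) set" where
  "Uk k = {A \<in> Ck k. Theta k A > 0}"

end

(* Openness: Theta_k(A) > 0 says that each product A_a A_b has a nonzero k x k minor, and the
   minors depend continuously on A.

   Density: given A in C_k(d), pick for each pair (a, b) a matrix X_ab with
   rank (A_a X_ab A_b) = k (X_ab maps the column space of A_b isomorphically onto the row space
   of A_a), resp. rank (X A_a X A_a) = k when a = b.  Lagrange interpolation yields a polynomial
   curve t -> Q(t) of m-tuples of matrices with Q(t_0) = (I, ..., I) and, at a node t_ab,
   Q(t_ab)_b = X_ab and Q(t_ab)_j = I for j <> b.  Along B(t) = (Q(t)_j A_j)_j the functions
   det Q(t)_j and a suitable k x k minor of B(t)_a B(t)_b are polynomials in t that do not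
   vanish identically.  Hence B(t) lies in U_k for all but finitely many t, while B(t_0) = A. *)

theory Submission
  imports Defs "Jordan_Normal_Form.Determinant"
begin

no_notation Matrix.vec_index (infixl "$" 100)
no_notation Matrix.scalar_prod (infix "\<bullet>" 70)
hide_const (open) Matrix.row Matrix.rows Matrix.mat Determinant.det

lemma polynomial_function_vec_iff:
  fixes f :: "'a::real_normed_vector \<Rightarrow> 'b::euclidean_space^'n"
  shows "polynomial_function f \<longleftrightarrow> (\<forall>i. polynomial_function (\<lambda>x. f x $ i))"
proof
  assume "polynomial_function f"
  then show "\<forall>i. polynomial_function (\<lambda>x. f x $ i)"
    using polynomial_function_compose[OF _ polynomial_function_bounded_linear[OF bounded_linear_vec_nth]]
    by (auto simp: o_def)
next
  assume "\<forall>i. polynomial_function (\<lambda>x. f x $ i)"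
  then show "polynomial_function f"
    by (auto simp: polynomial_function_iff_Basis_inner Basis_vec_def inner_axis)
qed

lemma polynomial_function_matrix_iff:
  fixes P :: "'a::real_normed_vector \<Rightarrow> real^'n^'m"
  shows "polynomial_function P \<longleftrightarrow> (\<forall>i j. real_polynomial_function (\<lambda>x. P x $ i $ j))"
  by (simp add: polynomial_function_vec_iff real_polynomial_function_eq)

lemma polynomial_function_matrix_mult:
  fixes P :: "'a::real_normed_vector \<Rightarrow> real^'n^'m" and Q :: "'a \<Rightarrow> real^'p^'n"
  assumes "polynomial_function P" "polynomial_function Q"
  shows "polynomial_function (\<lambda>x. P x ** Q x)"
  using assms unfolding polynomial_function_matrix_iff matrix_matrix_mult_def vec_lambda_beta
  by (intro allI real_polynomial_function_sum real_polynomial_function.intros(4)) auto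

lemma polynomial_function_left_mult_tuple:
  fixes Q :: "'a::real_normed_vector \<Rightarrow> (real^'n^'p)^'m" and A :: "(real^'q^'n)^'m"
  assumes "polynomial_function Q"
  shows "polynomial_function (\<lambda>x. \<chi> j. Q x $ j ** A $ j)"
proof -
  have "polynomial_function (\<lambda>x. Q x $ j)" for j
    using assms polynomial_function_vec_iff by blast
  then show ?thesis
    by (subst polynomial_function_vec_iff) (simp add: polynomial_function_matrix_mult)
qed

lemma real_polynomial_function_det:
  fixes P :: "'a::real_normed_vector \<Rightarrow> real^'n^'n"
  assumes "polynomial_function P"
  shows "real_polynomial_function (\<lambda>x. det (P x))"
  using assms unfolding polynomial_function_matrix_iff Determinants.det_def
  by (intro real_polynomial_function_sum real_polynomial_function_prod real_polynomial_function.intros(2,4))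
    (auto simp: finite_permutations)

lemma real_polynomial_function_minor:
  fixes P :: "'a::real_normed_vector \<Rightarrow> real^('n::{finite,linorder})^('n::{finite,linorder})"
  assumes "polynomial_function P"
  shows "real_polynomial_function (\<lambda>x. minor k (P x) I J)"
  using assms unfolding polynomial_function_matrix_iff minor_def Let_def
  by (intro real_polynomial_function_sum real_polynomial_function_prod real_polynomial_function.intros(2,4))
    (auto simp: finite_permutations)

lemma real_polynomial_function_finite_zeros:
  fixes f :: "real \<Rightarrow> real"
  assumes "real_polynomial_function f" "f t \<noteq> 0"
  shows "finite {x. f x = 0}"
proof -
  obtain a n where f: "f = (\<lambda>x. \<Sum>i\<le>n. a i * x ^ i)"
    using assms(1) by (auto simp: real_polynomial_function_iff_sum)
  then have "\<exists>i\<le>n. a i \<noteq> 0"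
    using assms(2) by (metis (no_types, lifting) atMost_iff mult_eq_0_iff sum.neutral)
  then show ?thesis
    by (simp add: f polyfun_finite_roots)
qed

lemma polynomial_interpolation:
  fixes x :: "'i \<Rightarrow> real" and y :: "'i \<Rightarrow> 'b::real_normed_vector"
  assumes "finite S" "inj_on x S"
  obtains p where "polynomial_function p" "\<And>i. i \<in> S \<Longrightarrow> p (x i) = y i"
proof
  define L where "L i t = (\<Prod>j\<in>S - {i}. (t - x j) / (x i - x j))" for i t
  have L_node: "L i (x l) = (if l = i then 1 else 0)" if "i \<in> S" "l \<in> S" for i l
  proof (cases "l = i")
    case True
    with that assms(2) show ?thesis
      by (auto simp: L_def inj_on_def intro!: prod.neutral split: if_splits)
  next
    case False
    with that assms(1) show ?thesis
      by (auto simp: L_def)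
  qed
  have "real_polynomial_function (L i)" for i
    unfolding L_def using assms(1)
    by (intro real_polynomial_function_prod real_polynomial_function_divide
        real_polynomial_function_diff real_polynomial_function.intros(2)
        real_polynomial_function.intros(1)[OF bounded_linear_ident]) auto
  then show "polynomial_function (\<lambda>t. \<Sum>i\<in>S. L i t *\<^sub>R y i)"
    using assms(1) unfolding real_polynomial_function_eq
    by (intro polynomial_function_sum polynomial_function_mult) auto
  show "(\<Sum>i\<in>S. L i (x l) *\<^sub>R y i) = y l" if "l \<in> S" for l
    using that assms(1) by (simp add: L_node if_distrib[of "\<lambda>c. c *\<^sub>R _"] cong: if_cong)
qed

lemma continuous_mem_closure_cofinite:
  fixes f :: "real \<Rightarrow> 'a::topological_space"
  assumes "continuous_on UNIV f" "finite F" "\<And>t. t \<notin> F \<Longrightarrow> f t \<in> S"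
  shows "f t \<in> closure S"
proof -
  have "t islimpt (- F)"
    using islimpt_Un_finite[OF assms(2), of t "- F"] by simp
  then have "t \<in> closure (- F)"
    by (simp add: closure_def)
  moreover have "f ` closure (- F) \<subseteq> closure S"
    using assms by (intro image_closure_subset) (auto intro: continuous_on_subset closure_subset[THEN subsetD])
  ultimately show ?thesis
    by blast
qed

lemma subspace_range_matrix_vector_mult: "subspace (range ((*v) (A :: real^'n^'m)))"
  by (rule linear_subspace_image[OF matrix_vector_mul_linear subspace_UNIV])

lemma rank_mult_left_inj_on:
  fixes X :: "real^'n^'m" and M :: "real^'p^'n"
  assumes "inj_on ((*v) X) (range ((*v) M))"
  shows "rank (X ** M) = rank M"
proof -
  have "range ((*v) (X ** M)) = (*v) X ` range ((*v) M)"
    by (auto simp: image_comp o_def matrix_vector_mul_assoc)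
  moreover have "dim ((*v) X ` range ((*v) M)) = dim (range ((*v) M))"
    using assms subspace_range_matrix_vector_mult[of M]
    by (intro dim_image_eq[OF matrix_vector_mul_linear]) (simp add: span_eq_iff[THEN iffD2])
  ultimately show ?thesis
    by (simp add: rank_dim_range)
qed

lemma rank_mult_left_det_nonzero:
  fixes P :: "real^'n^'n" and M :: "real^'p^'n"
  assumes "det P \<noteq> 0"
  shows "rank (P ** M) = rank M"
proof -
  have "inj ((*v) P)"
    using assms by (simp add: det_eq_0_rank less_rank_noninjective)
  then show ?thesis
    by (auto intro: rank_mult_left_inj_on inj_on_subset)
qed

lemma matrix_onto_rowspace_exists:
  fixes A :: "real^'n^'m" and B :: "real^'p^'q"
  assumes "rank B = rank A"
  obtains X :: "real^'q^'n"
  where "(*v) X ` range ((*v) B) = span (rows A)" "inj_on ((*v) X) (range ((*v) B))"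
proof -
  have "dim (range ((*v) B)) = dim (span (rows A))"
    using assms rank_dim_range[of B] row_rank_def[of A] by simp
  then obtain f g where f: "linear f" "f ` range ((*v) B) = span (rows A)"
    and gf: "\<And>x. x \<in> range ((*v) B) \<Longrightarrow> g (f x) = x"
    using isometries_subspaces[OF subspace_range_matrix_vector_mult subspace_span] by metis
  have "(*v) (matrix f) = f"
    using f(1) by (rule matrix_vector_mul(2))
  moreover have "inj_on f (range ((*v) B))"
    using gf by (rule inj_on_inverseI)
  ultimately show ?thesis
    using f(2) that[of "matrix f"] by simp
qed

lemma rank_mult_through_rowspace:
  fixes A :: "real^'n^'m" and X :: "real^'q^'n" and B :: "real^'p^'q"
  assumes "(*v) X ` range ((*v) B) = span (rows A)"
  shows "rank (A ** X ** B) = rank A"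
proof -
  have "rank (A ** X ** B) = dim ((*v) A ` span (rows A))"
    by (simp flip: assms add: rank_dim_range image_comp o_def matrix_vector_mul_assoc matrix_mul_assoc)
  also have "\<dots> = dim (span (rows A))"
    by (rule dim_image_eq[OF matrix_vector_mul_linear])
      (simp add: span_span inj_on_def matrix_vector_mul_injective_on_rowspace)
  finally show ?thesis
    by (simp add: row_rank_def)
qed

lemma rank_preserving_middle_factor_exists:
  fixes A :: "real^'n^'m" and B :: "real^'p^'q"
  assumes "rank A = k" "rank B = k"
  shows "\<exists>X. rank (A ** X ** B) = k"
  using assms by (metis matrix_onto_rowspace_exists rank_mult_through_rowspace)

lemma rank_preserving_square_exists:
  fixes A :: "real^'n^'n"
  assumes "rank A = k"
  shows "\<exists>X. rank (X ** A ** X ** A) = k"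
proof -
  obtain X where X_onto: "(*v) X ` range ((*v) A) = span (rows A)"
    and X_inj: "inj_on ((*v) X) (range ((*v) A))"
    using matrix_onto_rowspace_exists by blast
  have "range ((*v) (A ** X ** A)) \<subseteq> range ((*v) A)"
    by (auto simp flip: matrix_vector_mul_assoc)
  then have "rank (X ** (A ** X ** A)) = rank (A ** X ** A)"
    using X_inj by (auto intro: rank_mult_left_inj_on inj_on_subset)
  also have "\<dots> = k"
    using X_onto assms by (simp add: rank_mult_through_rowspace)
  finally show ?thesis
    by (auto simp: matrix_mul_assoc)
qed

lemma independent_subfamily_exists:
  fixes f :: "'i \<Rightarrow> 'v::real_vector"
  obtains R where "card R = dim (range f)" "inj_on f R" "independent (f ` R)"
proof -
  obtain B where B: "B \<subseteq> range f" "independent B" "range f \<subseteq> span B" "card B = dim (range f)"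
    by (rule basis_exists)
  define R where "R = inv_into UNIV f ` B"
  have f_inv: "f (inv_into UNIV f b) = b" if "b \<in> B" for b
    using that B(1) by (blast intro: f_inv_into_f)
  have "f ` R = B"
    unfolding R_def image_image using f_inv by simp
  moreover have "inj_on f R"
    unfolding R_def using f_inv by (auto intro!: inj_onI)
  ultimately show ?thesis
    using B that card_image by metis
qed

lemma independent_family_sum_eq_0:
  fixes f :: "'i \<Rightarrow> 'v::real_vector"
  assumes "finite J" "inj_on f J" "independent (f ` J)" "(\<Sum>j\<in>J. u j *\<^sub>R f j) = 0" "j \<in> J"
  shows "u j = 0"
proof -
  have "(\<Sum>w\<in>f ` J. u (inv_into J f w) *\<^sub>R w) = 0"
    using assms(4) by (simp add: sum.reindex[OF assms(2)] inv_into_f_f[OF assms(2)])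
  then have "u (inv_into J f (f j)) = 0"
    by (rule independentD[OF assms(3) finite_imageI[OF assms(1)] subset_refl _ imageI[OF assms(5)],
          where u = "\<lambda>w. u (inv_into J f w)"])
  then show ?thesis
    using assms(2,5) by simp
qed

definition restrict_rows :: "'m set \<Rightarrow> 'a::zero^'n^'m \<Rightarrow> 'a^'n^'m" where
  "restrict_rows I M = (\<chi> i. if i \<in> I then M $ i else 0)"

lemma row_restrict_rows: "row i (restrict_rows I M) = (if i \<in> I then row i M else 0)"
  by (simp add: restrict_rows_def Finite_Cartesian_Product.row_def vec_eq_iff)

lemma rank_restrict_rows:
  fixes M :: "real^'n^'m"
  assumes "inj_on (\<lambda>i. row i M) R" "independent ((\<lambda>i. row i M) ` R)"
  shows "rank (restrict_rows R M) = card R"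
proof -
  have "rows (restrict_rows R M) \<subseteq> insert 0 ((\<lambda>i. row i M) ` R)"
       "(\<lambda>i. row i M) ` R \<subseteq> rows (restrict_rows R M)"
    by (auto simp: Finite_Cartesian_Product.rows_def row_restrict_rows)
  then have "span (rows (restrict_rows R M)) = span ((\<lambda>i. row i M) ` R)"
    by (metis span_insert_0 span_mono subset_antisym)
  then have "rank (restrict_rows R M) = dim ((\<lambda>i. row i M) ` R)"
    by (metis dim_span row_rank_def)
  also have "\<dots> = card R"
    using assms by (simp add: dim_eq_card_independent card_image)
  finally show ?thesis .
qed

lemma sum_columns_restrict_rows_eq_0:
  fixes M :: "real^'n^'m" and cs :: "'n list"
  assumes "\<And>r. r \<in> I \<Longrightarrow> (\<Sum>l<k. c l * M $ r $ (cs ! l)) = 0"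
  shows "(\<Sum>l<k. c l *\<^sub>R column (cs ! l) (restrict_rows I M)) = 0"
  using assms by (simp add: Finite_Cartesian_Product.vec_eq_iff column_def restrict_rows_def)

lemma minor_eq_det_submatrix:
  fixes A :: "real^('n::{finite,linorder})^('n::{finite,linorder})"
  shows "minor k A I J = Determinant.det (Matrix.mat k k
           (\<lambda>(i, j). A $ (sorted_list_of_set I ! i) $ (sorted_list_of_set J ! j)))"
  unfolding minor_def Determinant.det_def Let_def by (simp add: atLeast0LessThan)

lemma minor_nonzero_if_columns_independent:
  fixes M :: "real^('n::{finite,linorder})^('n::{finite,linorder})"
  assumes I: "card I = k" and J: "card J = k"
    and inj: "inj_on (\<lambda>j. column j (restrict_rows I M)) J"
    and indep: "independent ((\<lambda>j. column j (restrict_rows I M)) ` J)"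
  shows "minor k M I J \<noteq> 0"
proof
  let ?c = "\<lambda>j. column j (restrict_rows I M)"
  define rs where "rs = sorted_list_of_set I"
  define cs where "cs = sorted_list_of_set J"
  have rs: "length rs = k" "set rs = I"
    using I by (simp_all add: rs_def)
  have cs: "length cs = k" "distinct cs" "set cs = J"
    using J by (simp_all add: cs_def)
  define S where "S = Matrix.mat k k (\<lambda>(i, l). M $ (rs ! i) $ (cs ! l))"
  assume "minor k M I J = 0"
  then have "Determinant.det S = 0"
    by (simp add: minor_eq_det_submatrix S_def rs_def cs_def)
  then obtain v where v: "v \<in> carrier_vec k" "v \<noteq> 0\<^sub>v k" "S *\<^sub>v v = 0\<^sub>v k"
    using det_0_iff_vec_prod_zero_field[of S k] by (auto simp: S_def)
  then obtain l0 where l0: "l0 < k" "Matrix.vec_index v l0 \<noteq> 0"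
    by (metis carrier_vecD eq_vecI index_zero_vec)
  have bij: "bij_betw ((!) cs) {..<k} J"
    using cs by (metis bij_betw_nth)
  define u where "u j = Matrix.vec_index v (inv_into {..<k} ((!) cs) j)" for j
  have u_cs: "u (cs ! l) = Matrix.vec_index v l" if "l < k" for l
    using bij that by (simp add: u_def bij_betw_def)
  have "(\<Sum>l<k. Matrix.vec_index v l * M $ r $ (cs ! l)) = 0" if "r \<in> I" for r
  proof -
    obtain i where i: "i < k" "r = rs ! i"
      using rs \<open>r \<in> I\<close> by (metis in_set_conv_nth)
    then have "(\<Sum>l<k. Matrix.vec_index v l * M $ r $ (cs ! l)) = Matrix.vec_index (S *\<^sub>v v) i"
      using v(1) by (simp add: S_def Matrix.scalar_prod_def lessThan_atLeast0 mult.commute)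
    also have "\<dots> = 0"
      using v(3) i by simp
    finally show ?thesis .
  qed
  then have "(\<Sum>l<k. Matrix.vec_index v l *\<^sub>R ?c (cs ! l)) = 0"
    by (rule sum_columns_restrict_rows_eq_0)
  then have "(\<Sum>j\<in>J. u j *\<^sub>R ?c j) = 0"
    using u_cs by (simp add: sum.reindex_bij_betw[OF bij, symmetric])
  then have "u (cs ! l0) = 0"
    using cs l0 by (intro independent_family_sum_eq_0[OF _ inj indep]) auto
  then show False
    using u_cs l0 by simp
qed

lemma rank_imp_nonzero_minor:
  fixes M :: "real^('n::{finite,linorder})^('n::{finite,linorder})"
  assumes "rank M = k"
  obtains I J where "card I = k" "card J = k" "minor k M I J \<noteq> 0"
proof -
  have "rank M = dim (range (\<lambda>i. row i M))"
    by (simp add: row_rank_def Finite_Cartesian_Product.rows_def full_SetCompr_eq)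
  then obtain R where R: "card R = k" "inj_on (\<lambda>i. row i M) R" "independent ((\<lambda>i. row i M) ` R)"
    using independent_subfamily_exists assms by metis
  then have "rank (restrict_rows R M) = k"
    by (simp add: rank_restrict_rows)
  moreover have "rank (restrict_rows R M) = dim (range (\<lambda>j. column j (restrict_rows R M)))"
    by (simp add: column_rank_def columns_def full_SetCompr_eq)
  ultimately obtain J where "card J = k" "inj_on (\<lambda>j. column j (restrict_rows R M)) J"
      "independent ((\<lambda>j. column j (restrict_rows R M)) ` J)"
    using independent_subfamily_exists by metis
  then show ?thesis
    using R(1) minor_nonzero_if_columns_independent that by blast
qed

lemma wedge_norm_pos:
  fixes M :: "real^('n::{finite,linorder})^('n::{finite,linorder})"
  assumes "card I = k" "card J = k" "minor k M I J \<noteq> 0"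
  shows "0 < wedge_norm k M"
proof -
  let ?S = "{I::'n set. card I = k}"
  have "0 < (wedge k M I J)\<^sup>2"
    using assms by (simp add: wedge_def)
  also have "\<dots> \<le> (\<Sum>J'\<in>?S. (wedge k M I J')\<^sup>2)"
    using assms by (intro member_le_sum) auto
  also have "\<dots> \<le> (\<Sum>I'\<in>?S. \<Sum>J'\<in>?S. (wedge k M I' J')\<^sup>2)"
    using assms by (intro member_le_sum[where f = "\<lambda>I'. \<Sum>J'\<in>?S. (wedge k M I' J')\<^sup>2"] sum_nonneg) auto
  finally show ?thesis
    by (simp add: wedge_norm_def)
qed

lemma Theta_pos_iff:
  fixes A :: "(real^('n::{finite,linorder})^('n::{finite,linorder}))^('m::finite)"
  shows "0 < Theta k A \<longleftrightarrow> (\<forall>a b. 0 < wedge_norm k (A $ a ** A $ b))"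
proof -
  have "{wedge_norm k (A $ a ** A $ b) | a b. True} = (\<lambda>(a, b). wedge_norm k (A $ a ** A $ b)) ` UNIV"
    by auto
  then show ?thesis
    by (simp add: Theta_def)
qed

lemma Uk_eq:
  "Uk k = Ck k \<inter> {A :: (real^('n::{finite,linorder})^('n::{finite,linorder}))^('m::finite).
                    \<forall>a b. 0 < wedge_norm k (A $ a ** A $ b)}"
  by (auto simp: Uk_def Theta_pos_iff)

lemma continuous_on_wedge_norm_product:
  "continuous_on UNIV (\<lambda>A :: (real^('n::{finite,linorder})^('n::{finite,linorder}))^('m::finite).
     wedge_norm k (A $ a ** A $ b))"
  unfolding wedge_norm_def wedge_def minor_def matrix_matrix_mult_def Let_def
  by (auto intro!: continuous_intros)

lemma open_wedge_norm_products_pos: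
  "open {A :: (real^('n::{finite,linorder})^('n::{finite,linorder}))^('m::finite).
           \<forall>a b. 0 < wedge_norm k (A $ a ** A $ b)}" (is "open ?U")
proof -
  have "?U = (\<Inter>(a, b). {A. 0 < wedge_norm k (A $ a ** A $ b)})"
    by auto
  also have "open \<dots>"
    using open_Collect_less[OF continuous_on_const continuous_on_wedge_norm_product]
    by (intro open_INT) (auto split: prod.split)
  finally show ?thesis .
qed

lemma finite_not_in_Uk_along_polynomial_curve:
  fixes Q :: "real \<Rightarrow> (real^('n::{finite,linorder})^('n::{finite,linorder}))^('m::finite)"
  assumes Q: "polynomial_function Q" and A: "A \<in> Ck k"
    and det_Q: "\<And>j. \<exists>t. det (Q t $ j) \<noteq> 0"
    and rank_Q: "\<And>a b. \<exists>t. rank ((Q t $ a ** A $ a) ** (Q t $ b ** A $ b)) = k"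
  shows "finite {t. (\<chi> j. Q t $ j ** A $ j) \<notin> Uk k}"
proof -
  define B where "B t = (\<chi> j. Q t $ j ** A $ j)" for t
  have Q_entry: "polynomial_function (\<lambda>t. Q t $ j)" for j
    using Q by (simp add: polynomial_function_vec_iff)
  have wedge_zeros: "finite {t. \<not> 0 < wedge_norm k (B t $ a ** B t $ b)}" for a b
  proof -
    obtain t where "rank (B t $ a ** B t $ b) = k"
      using rank_Q by (auto simp: B_def)
    then obtain I J where IJ: "card I = k" "card J = k" "minor k (B t $ a ** B t $ b) I J \<noteq> 0"
      by (rule rank_imp_nonzero_minor)
    have "polynomial_function B"
      unfolding B_def using Q by (rule polynomial_function_left_mult_tuple)
    then have "polynomial_function (\<lambda>t. B t $ a ** B t $ b)"
      by (simp add: polynomial_function_vec_iff[of B] polynomial_function_matrix_mult)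
    then have "finite {t. minor k (B t $ a ** B t $ b) I J = 0}"
      using IJ(3) real_polynomial_function_finite_zeros[OF real_polynomial_function_minor] by blast
    moreover have "{t. \<not> 0 < wedge_norm k (B t $ a ** B t $ b)} \<subseteq> {t. minor k (B t $ a ** B t $ b) I J = 0}"
      using IJ(1,2) wedge_norm_pos by blast
    ultimately show ?thesis
      by (rule finite_subset[rotated])
  qed
  have det_zeros: "finite {t. det (Q t $ j) = 0}" for j
    using det_Q[of j] real_polynomial_function_finite_zeros[OF real_polynomial_function_det[OF Q_entry]]
    by blast
  have "B t \<in> Ck k" if "\<And>j. det (Q t $ j) \<noteq> 0" for t
    using that A by (simp add: B_def Ck_def rank_mult_left_det_nonzero)
  then have "{t. B t \<notin> Uk k} \<subseteq> (\<Union>j. {t. det (Q t $ j) = 0})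
      \<union> (\<Union>a. \<Union>b. {t. \<not> 0 < wedge_norm k (B t $ a ** B t $ b)})"
    by (auto simp: Uk_eq)
  then show ?thesis
    using det_zeros wedge_zeros by (auto simp: B_def intro: finite_subset)
qed

lemma Ck_subset_closure_Uk:
  "Ck k \<subseteq> closure (Uk k :: ((real^('n::{finite,linorder})^('n::{finite,linorder}))^('m::finite)) set)"
proof
  fix A :: "(real^('n::{finite,linorder})^('n::{finite,linorder}))^('m::finite)"
  assume A: "A \<in> Ck k"
  \<comment> \<open>At the node of (a, b) only the b-th matrix is perturbed, so for a = b both factors are.\<close>
  have "\<exists>X. rank (if a = b then X ** A $ a ** X ** A $ a else A $ a ** X ** A $ b) = k" for a b
    using A by (cases "a = b") (auto simp: Ck_def intro: rank_preserving_square_exists rank_preserving_middle_factor_exists)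
  then obtain X where X: "\<And>a b. rank (if a = b then X a b ** A $ a ** X a b ** A $ a
                                       else A $ a ** X a b ** A $ b) = k"
    by metis
  obtain node :: "('m \<times> 'm) option \<Rightarrow> nat" where "inj node"
    using finite_imp_inj_to_nat_seg[of "UNIV :: ('m \<times> 'm) option set"] by auto
  define Y where "Y v = (\<chi> j. case v of None \<Rightarrow> mat 1 | Some (a, b) \<Rightarrow> if j = b then X a b else mat 1)"
    for v
  have "inj_on (\<lambda>v. real (node v)) UNIV"
    using \<open>inj node\<close> by (simp add: inj_on_def)
  then obtain Q where Q: "polynomial_function Q" and Q_node: "\<And>v. Q (real (node v)) = Y v"
    using polynomial_interpolation[of UNIV "\<lambda>v. real (node v)" Y] by auto
  have "finite {t. (\<chi> j. Q t $ j ** A $ j) \<notin> Uk k}"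
  proof (rule finite_not_in_Uk_along_polynomial_curve[OF Q A])
    show "\<exists>t. det (Q t $ j) \<noteq> 0" for j
      using Q_node[of None] by (intro exI[of _ "real (node None)"]) (simp add: Y_def)
    show "\<exists>t. rank ((Q t $ a ** A $ a) ** (Q t $ b ** A $ b)) = k" for a b
      using Q_node[of "Some (a, b)"] X[of a b]
      by (intro exI[of _ "real (node (Some (a, b)))"]) (simp add: Y_def matrix_mul_assoc split: if_splits)
  qed
  moreover have "continuous_on UNIV (\<lambda>t. \<chi> j. Q t $ j ** A $ j)"
    by (intro continuous_on_polymonial_function polynomial_function_left_mult_tuple Q)
  ultimately have "(\<chi> j. Q (real (node None)) $ j ** A $ j) \<in> closure (Uk k)"
    by (intro continuous_mem_closure_cofinite[where f = "\<lambda>t. \<chi> j. Q t $ j ** A $ j"]) auto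
  then show "A \<in> closure (Uk k)"
    by (simp add: Q_node Y_def)
qed

theorem proposition4p3:
  fixes k :: nat
    and C U :: "((real^('n::{finite,linorder})^('n::{finite,linorder}))^('m::finite)) set"
  assumes "1 \<le> k" and "k \<le> CARD('n)"
    and "C = Ck k" and "U = Uk k"
  shows "openin (top_of_set C) U \<and> C \<subseteq> closure U"
  using assms(3,4) Uk_eq[of k] open_wedge_norm_products_pos[of k] Ck_subset_closure_Uk[of k]
  by (auto simp: openin_open)

end
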